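(* Let $U\in C([0,1])\cap C^1((0,1])\cap C^2((0,1))$ satisfy $U''>0$ on $(0,1)$, $\lim_{h\downarrow0}U'(h)=-\infty$, $r\mapsto rU''(r)$ non-decreasing on $(0,1)$, and $U(0)=U(1)=0$. Then for all $r,s,t\in[0,1]$ and $r_0\in(0,1]$, \[U((1-t)r+ts)\ge(1-t)U(r)+tU(s)+rU(1-t)+sU(t),\] \[d_U((1-t)r+ts,r_0)\ge(1-t)d_U(r,r_0)+td_U(s,r_0)+rU(1-t)+sU(t).\]
   Context: $d_U(r,r_0)=U(r)-U(r_0)-(r-r_0)U'(r_0)$ for $r\in[0,1]$, $r_0\in(0,1]$. *)

theory Defs
  imports "HOL-Analysis.Analysis"
begin

text \<open>Bregman-type divergence of U, with U' the (one-sided at 1) derivative of U.\<close>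
definition d_U :: "(real \<Rightarrow> real) \<Rightarrow> (real \<Rightarrow> real) \<Rightarrow> real \<Rightarrow> real \<Rightarrow> real" where
  "d_U U U' r r0 = U r - U r0 - (r - r0) * U' r0"

end

(*
  For fixed x, the defect l U(x) + x U(l) - U(l x) has second derivative
  x U''(l) - x^2 U''(l x) in l, which is nonnegative exactly because r U''(r) is
  non-decreasing; so the defect is convex on [0,1], and since it vanishes at l = 0
  and l = 1 it is nonpositive. Applied to (1 - t, r) and (t, s), together with the
  superadditivity of the convex function U with U(0) = 0, this gives the first
  inequality. The second follows because d_U(-, r0) differs from U by an affine
  function.
*)
theory Submission
  imports Defs
begin

lemma convex_on_if_convex_on_interior:
  fixes f :: "'a::euclidean_space \<Rightarrow> real"
  assumes "convex S" and "c \<in> interior S"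
    and cont: "continuous_on S f" and conv: "convex_on (interior S) f"
  shows "convex_on S f"
proof (rule convex_onI)
  fix t :: real and x y
  assume t: "0 < t" "t < 1" and x: "x \<in> S" and y: "y \<in> S"
  \<comment> \<open>The contraction towards c is affine and maps S into interior S; let its ratio tend to 0.\<close>
  define shrink where "shrink e p = p - e *\<^sub>R (p - c)" for e p
  have shrink_interior: "\<forall>\<^sub>F e in at_right 0. shrink e p \<in> interior S" if "p \<in> S" for p
    using eventually_at_right_real[of 0 1]
    by (rule eventually_mono)
      (auto simp: shrink_def intro!: mem_interior_convex_shrink assms that)
  have lim_f: "((\<lambda>e. f (shrink e p)) \<longlongrightarrow> f p) (at_right 0)" if "p \<in> S" for p
  proof (rule continuous_on_tendsto_compose[OF cont _ that])
    have "((\<lambda>e. p - e *\<^sub>R (p - c)) \<longlongrightarrow> p - 0 *\<^sub>R (p - c)) (at_right 0)"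
      by (intro tendsto_intros)
    then show "((\<lambda>e. shrink e p) \<longlongrightarrow> p) (at_right 0)" by (simp add: shrink_def)
    show "\<forall>\<^sub>F e in at_right 0. shrink e p \<in> S"
      using shrink_interior[OF that] by (rule eventually_mono) (use interior_subset in blast)
  qed
  define z where "z = (1 - t) *\<^sub>R x + t *\<^sub>R y"
  have "z \<in> S" using \<open>convex S\<close> x y t by (simp add: z_def convexD)
  have "\<forall>\<^sub>F e in at_right 0. f (shrink e z) \<le> (1 - t) * f (shrink e x) + t * f (shrink e y)"
    using eventually_conj[OF shrink_interior[OF x] shrink_interior[OF y]]
  proof (rule eventually_mono)
    fix e assume "shrink e x \<in> interior S \<and> shrink e y \<in> interior S"
    moreover have "shrink e z = (1 - t) *\<^sub>R shrink e x + t *\<^sub>R shrink e y"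
      by (simp add: shrink_def z_def algebra_simps)
    ultimately show "f (shrink e z) \<le> (1 - t) * f (shrink e x) + t * f (shrink e y)"
      using convex_onD[OF conv, of t] t by auto
  qed
  moreover have "((\<lambda>e. (1 - t) * f (shrink e x) + t * f (shrink e y))
      \<longlongrightarrow> (1 - t) * f x + t * f y) (at_right 0)"
    by (intro tendsto_intros lim_f x y)
  ultimately have "f z \<le> (1 - t) * f x + t * f y"
    using lim_f[OF \<open>z \<in> S\<close>] by (intro tendsto_le[OF trivial_limit_at_right_real])
  then show "f ((1 - t) *\<^sub>R x + t *\<^sub>R y) \<le> (1 - t) * f x + t * f y"
    by (simp add: z_def)
qed (fact \<open>convex S\<close>)

lemma convex_on_scaleR_le:
  fixes f :: "'a::real_vector \<Rightarrow> real"
  assumes "convex_on S f" and "0 \<in> S" and "x \<in> S" and "f 0 \<le> 0"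
    and "0 \<le> a" and "a \<le> 1"
  shows "f (a *\<^sub>R x) \<le> a * f x"
proof -
  have "f ((1 - a) *\<^sub>R 0 + a *\<^sub>R x) \<le> (1 - a) * f 0 + a * f x"
    using assms by (intro convex_onD) auto
  moreover have "(1 - a) * f 0 \<le> 0"
    using assms by (simp add: mult_nonneg_nonpos)
  ultimately show ?thesis
    by simp
qed

lemma convex_on_superadditive:
  fixes f :: "real \<Rightarrow> real"
  assumes conv: "convex_on {0..c} f" and "f 0 \<le> 0"
    and "0 \<le> a" and "0 \<le> b" and "a + b \<le> c"
  shows "f a + f b \<le> f (a + b)"
proof (cases "a + b = 0")
  case True
  then have "a = 0" "b = 0" using assms by auto
  then show ?thesis using assms by simp
next
  case False
  then have "a + b > 0" using assms by simp
  have scaled: "f p \<le> p / (a + b) * f (a + b)" if "0 \<le> p" "p \<le> a + b" for p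
    using convex_on_scaleR_le[OF conv, of "a + b" "p / (a + b)"] that assms \<open>a + b > 0\<close>
    by simp
  have "f a + f b \<le> (a / (a + b) + b / (a + b)) * f (a + b)"
    using scaled[of a] scaled[of b] assms by (simp add: distrib_right)
  also have "\<dots> = f (a + b)"
    using \<open>a + b > 0\<close> by (simp add: add_divide_distrib[symmetric])
  finally show ?thesis .
qed

lemma convex_on_mult_defect:
  fixes U U' U'' :: "real \<Rightarrow> real"
  assumes dU: "\<And>x. x \<in> {0<..<1} \<Longrightarrow> (U has_real_derivative U' x) (at x)"
    and dU': "\<And>x. x \<in> {0<..<1} \<Longrightarrow> (U' has_real_derivative U'' x) (at x)"
    and mono: "mono_on {0<..<1} (\<lambda>r. r * U'' r)"
    and x: "x \<in> {0<..1}"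
  shows "convex_on {0<..<1} (\<lambda>l. l * U x + x * U l - U (l * x))"
proof (rule f''_ge0_imp_convex[where f'="\<lambda>l. U x + x * U' l - x * U' (l * x)"
      and f''="\<lambda>l. x * U'' l - x * x * U'' (l * x)"])
  fix l :: real
  assume l: "l \<in> {0<..<1}"
  have lx_le: "l * x \<le> l"
    using l x by (simp add: mult_left_le)
  moreover have "0 < l * x" "l < 1"
    using l x by auto
  ultimately have lx: "l * x \<in> {0<..<1}"
    by simp
  have "((\<lambda>l. l * x) has_real_derivative x) (at l)"
    by (auto intro!: derivative_eq_intros)
  note chain = DERIV_chain2[OF _ this]
  show "((\<lambda>l. l * U x + x * U l - U (l * x)) has_real_derivative
      U x + x * U' l - x * U' (l * x)) (at l)"
    by (auto intro!: derivative_eq_intros dU l chain[OF dU[OF lx(1)]])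
  show "((\<lambda>l. U x + x * U' l - x * U' (l * x)) has_real_derivative
      x * U'' l - x * x * U'' (l * x)) (at l)"
    by (auto intro!: derivative_eq_intros dU' l chain[OF dU'[OF lx(1)]])
  have "l * (x * (x * U'' (l * x))) \<le> l * (x * U'' l)"
    using mult_left_mono[OF mono_onD[OF mono lx l lx_le], of x] x by (simp add: algebra_simps)
  then show "0 \<le> x * U'' l - x * x * U'' (l * x)"
    using l by simp
qed simp

lemma scaled_sum_le_comp_mult:
  fixes U U' U'' :: "real \<Rightarrow> real"
  assumes cont: "continuous_on {0..1} U"
    and dU: "\<And>x. x \<in> {0<..<1} \<Longrightarrow> (U has_real_derivative U' x) (at x)"
    and dU': "\<And>x. x \<in> {0<..<1} \<Longrightarrow> (U' has_real_derivative U'' x) (at x)"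
    and mono: "mono_on {0<..<1} (\<lambda>r. r * U'' r)"
    and U0: "U 0 = 0" and U1: "U 1 = 0"
    and l: "l \<in> {0..1}" and x: "x \<in> {0..1}"
  shows "l * U x + x * U l \<le> U (l * x)"
proof (cases "x = 0")
  case True
  then show ?thesis using U0 by simp
next
  case False
  define g where "g l = l * U x + x * U l - U (l * x)" for l
  have "continuous_on {0..1} (\<lambda>l. U (l * x))"
    using x by (intro continuous_on_compose2[OF cont]) (auto intro!: continuous_intros mult_le_one)
  then have g_cont: "continuous_on {0..1} g"
    unfolding g_def by (intro continuous_intros cont)
  have "convex_on {0<..<1} g"
    unfolding g_def using False x by (intro convex_on_mult_defect[OF dU dU' mono]) auto
  then have "convex_on {0..1} g"
    by (intro convex_on_if_convex_on_interior[of _ "1/2", OF _ _ g_cont]) simp_all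
  from convex_onD[OF this, of l 0 1] l have "g l \<le> (1 - l) * g 0 + l * g 1"
    by simp
  then show ?thesis
    using U0 U1 by (simp add: g_def)
qed

lemma d_U_convex_combination_gap:
  "(1 - t) * d_U U U' r r0 + t * d_U U U' s r0 - d_U U U' ((1 - t) * r + t * s) r0
    = (1 - t) * U r + t * U s - U ((1 - t) * r + t * s)"
  unfolding d_U_def by (simp add: algebra_simps)

theorem lemma3p2:
  fixes U U' U'' :: "real \<Rightarrow> real"
  assumes cont: "continuous_on {0..1} U"
    and d1: "\<And>x. x \<in> {0<..1} \<Longrightarrow> (U has_real_derivative U' x) (at x within {0..1})"
    and c1: "continuous_on {0<..1} U'"
    and d2: "\<And>x. x \<in> {0<..<1} \<Longrightarrow> (U' has_real_derivative U'' x) (at x)"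
    and c2: "continuous_on {0<..<1} U''"
    and pos: "\<And>x. x \<in> {0<..<1} \<Longrightarrow> U'' x > 0"
    and lim: "filterlim U' at_bot (at_right 0)"
    and mono: "mono_on {0<..<1} (\<lambda>r. r * U'' r)"
    and U0: "U 0 = 0" and U1: "U 1 = 0"
    and r: "r \<in> {0..1}" and s: "s \<in> {0..1}" and t: "t \<in> {0..1}"
    and r0: "r0 \<in> {0<..1}"
  shows "U ((1 - t) * r + t * s) \<ge> (1 - t) * U r + t * U s + r * U (1 - t) + s * U t
         \<and> d_U U U' ((1 - t) * r + t * s) r0
           \<ge> (1 - t) * d_U U U' r r0 + t * d_U U U' s r0 + r * U (1 - t) + s * U t"
proof -
  have dU: "(U has_real_derivative U' x) (at x)" if "x \<in> {0<..<1}" for x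
    using d1[of x] that at_within_interior[of x "{0..1}"] by simp
  have "convex_on {0<..<1} U"
    by (rule f''_ge0_imp_convex[OF _ dU d2]) (simp_all add: less_imp_le pos)
  then have "convex_on {0..1} U"
    by (intro convex_on_if_convex_on_interior[of _ "1/2", OF _ _ cont]) simp_all
  moreover have "(1 - t) * r + t * s \<le> 1"
    using r s t convex_bound_le[of r 1 s "1 - t" t] by simp
  ultimately have "U ((1 - t) * r) + U (t * s) \<le> U ((1 - t) * r + t * s)"
    using r s t U0 by (intro convex_on_superadditive) auto
  moreover have "(1 - t) * U r + r * U (1 - t) \<le> U ((1 - t) * r)"
    using r t by (intro scaled_sum_le_comp_mult[OF cont dU d2 mono U0 U1]) auto
  moreover have "t * U s + s * U t \<le> U (t * s)"
    using s t by (intro scaled_sum_le_comp_mult[OF cont dU d2 mono U0 U1]) auto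
  ultimately have "U ((1 - t) * r + t * s) \<ge> (1 - t) * U r + t * U s + r * U (1 - t) + s * U t"
    by linarith
  then show ?thesis
    using d_U_convex_combination_gap[of t U U' r r0 s] by linarith
qed

end
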